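(* Let $a\ge 6$ and $n\ge 0$ be integers, and let $R_n$, $S_n$, $c_{l,j,n}$, $P_{0,n}$ and $P_{l,n}$ be as defined in the context. (1) For every $z\in\mathbb{C}$ with $|z|>1$, $$S_n(z)=P_{0,n}(z)+\sum_{l=1}^{a}\frac{l(l+1)}{2}P_{l,n}(z)\,\mathrm{Li}_{l+2}(1/z),$$ and $P_{1,n}(1)=0$. (2) If moreover $a$ is even, then $P_{l,n}(1)=0$ for every $n\ge0$ and every even integer $l\in\{2,\dots,a\}$. Consequently $$S_n(1)=P_{0,n}(1)+\sum_{j=2}^{a/2} j(2j-1)\,P_{2j-1,n}(1)\,\zeta(2j+1).$$
   Context: Fix an integer $a\ge 6$. For a complex number $x$ and an integer $m\ge0$, $(x)_m=x(x+1)\cdots(x+m-1)$ is the Pochhammer symbol. For an integer $n\ge0$, define the rational function $$R_n(t)=n!^{a-6}\left(t+\frac n2\right)\frac{(t-n)_n^3\,(t+n+1)_n^3}{(t)_{n+1}^a},$$ and, for $z\in\mathbb{C}$ with $|z|\ge1$, $$S_n(z)=\sum_{k=1}^{\infty}\frac12 R_n''(k)\,z^{-k}.$$ Let $D_\lambda=\frac1{\lambda!}\left(\frac{d}{dt}\right)^\lambda$. For $l\in\{1,\dots,a\}$ and $j\in\{0,\dots,n\}$ put $c_{l,j,n}=D_{a-l}\big(R_n(t)(t+j)^a\big)\big|_{t=-j}$, so that $R_n(t)=\sum_{l=1}^a\sum_{j=0}^n c_{l,j,n}(t+j)^{-l}$. Define the polynomials $$P_{0,n}(z)=-\sum_{l=1}^a\sum_{j=1}^n\sum_{k=1}^{j}\frac{l(l+1)\,c_{l,j,n}}{2k^{l+2}}z^{j-k},\qquad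 P_{l,n}(z)=\sum_{j=0}^n c_{l,j,n}z^j\quad(1\le l\le a).$$ $\mathrm{Li}_s(x)=\sum_{k\ge1}x^k/k^s$ is the polylogarithm and $\zeta$ the Riemann zeta function. *)

theory Defs
  imports "HOL-Analysis.Analysis"
begin

text \<open>The rational function R_n(t), as a complex function (the value at the poles
  t = 0,-1,...,-n is irrelevant for everything below).\<close>
definition R :: "nat \<Rightarrow> nat \<Rightarrow> complex \<Rightarrow> complex" where
  "R a n t = (fact n) ^ (a - 6) * (t + of_nat n / 2)
     * pochhammer (t - of_nat n) n ^ 3 * pochhammer (t + of_nat n + 1) n ^ 3
     / pochhammer t (n + 1) ^ a"

text \<open>The function R_n(t) (t+j)^a with its removable singularity at t = -j removed:
  since (t)_(n+1) = prod_(i=0..n) (t+i), the factor (t+j)^a cancels.\<close>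
definition Rreg :: "nat \<Rightarrow> nat \<Rightarrow> nat \<Rightarrow> complex \<Rightarrow> complex" where
  "Rreg a n j t = (fact n) ^ (a - 6) * (t + of_nat n / 2)
     * pochhammer (t - of_nat n) n ^ 3 * pochhammer (t + of_nat n + 1) n ^ 3
     / (\<Prod>i\<in>{0..n} - {j}. (t + of_nat i) ^ a)"

text \<open>c_{l,j,n} = D_{a-l}(R_n(t)(t+j)^a) at t = -j.\<close>
definition cc :: "nat \<Rightarrow> nat \<Rightarrow> nat \<Rightarrow> nat \<Rightarrow> complex" where
  "cc a n l j = (deriv ^^ (a - l)) (Rreg a n j) (- of_nat j) / fact (a - l)"

definition S :: "nat \<Rightarrow> nat \<Rightarrow> complex \<Rightarrow> complex" where
  "S a n z = (\<Sum>k. (1/2) * (deriv ^^ 2) (R a n) (of_nat (Suc k)) * z powi (- int (Suc k)))"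

definition P0 :: "nat \<Rightarrow> nat \<Rightarrow> complex \<Rightarrow> complex" where
  "P0 a n z = - (\<Sum>l=1..a. \<Sum>j=1..n. \<Sum>k=1..j.
       of_nat (l * (l + 1)) * cc a n l j / (2 * of_nat k ^ (l + 2)) * z ^ (j - k))"

definition P :: "nat \<Rightarrow> nat \<Rightarrow> nat \<Rightarrow> complex \<Rightarrow> complex" where
  "P a n l z = (\<Sum>j=0..n. cc a n l j * z ^ j)"

definition polylog :: "nat \<Rightarrow> complex \<Rightarrow> complex" where
  "polylog s x = (\<Sum>k. x ^ Suc k / of_nat (Suc k) ^ s)"

text \<open>Riemann zeta at integers s >= 2 (only used there): zeta s = sum_(k>=1) 1/k^s.\<close>
definition zeta_nat :: "nat \<Rightarrow> complex" where
  "zeta_nat s = (\<Sum>k. 1 / of_nat (Suc k) ^ s)"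

end

theory Submission
  imports Defs "HOL-Complex_Analysis.Complex_Analysis"
begin

(* Since a \<ge> 6, R_n decays like t^-5 at infinity. Subtracting from R_n its principal parts
   sum_{l,j} c_{l,j,n} (t+j)^-l (read off from the Taylor expansion of R_n(t)(t+j)^a at -j)
   leaves an entire function tending to 0, so by Liouville R_n equals its partial fraction
   expansion. Comparing t R_n(t) \<rightarrow> 0 with t (t+j)^-l \<rightarrow> [l = 1] gives P_{1,n}(1) = 0.
   Differentiating the expansion twice and summing over k turns each (k+j)^-(l+2) into a tail
   of Li_{l+2}(1/z), which yields the formula for S_n. For even a, R_n(-t-n) = -R_n(t), hence
   c_{l,n-j,n} = (-1)^(l+1) c_{l,j,n}, and P_{l,n}(1) vanishes for even l. *)

lemma norm_pochhammer_le:
  fixes x :: "'a::real_normed_field"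
  shows "norm (pochhammer x m) \<le> (norm x + m) ^ m"
proof -
  have "norm (pochhammer x m) = (\<Prod>i<m. norm (x + of_nat i))"
    by (simp add: pochhammer_prod prod_norm atLeast0LessThan)
  also have "\<dots> \<le> (\<Prod>i<m. norm x + m)"
    by (intro prod_mono) (auto intro: order_trans[OF norm_triangle_ineq])
  finally show ?thesis by simp
qed

lemma norm_pochhammer_ge:
  fixes x :: "'a::real_normed_field"
  assumes "m \<le> norm x"
  shows "(norm x - m) ^ m \<le> norm (pochhammer x m)"
proof -
  have "(norm x - m) ^ m = (\<Prod>i<m. norm x - m)" by simp
  also have "\<dots> \<le> (\<Prod>i<m. norm (x + of_nat i))"
    using assms by (intro prod_mono) (auto intro: order_trans[OF _ norm_diff_ineq])
  also have "\<dots> = norm (pochhammer x m)"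
    by (simp add: pochhammer_prod prod_norm atLeast0LessThan)
  finally show ?thesis .
qed

lemma sum_mult_power_divide_power:
  fixes x :: "'a::field"
  assumes "x \<noteq> 0"
  shows "(\<Sum>k<m. c k * x ^ k) / x ^ m = (\<Sum>l=1..m. c (m - l) / x ^ l)"
proof -
  have "(\<Sum>k<m. c k * x ^ k) / x ^ m = (\<Sum>k<m. c k / x ^ (m - k))"
    unfolding sum_divide_distrib
  proof (rule sum.cong[OF refl])
    fix k assume "k \<in> {..<m}"
    then have "x ^ m = x ^ k * x ^ (m - k)" by (simp flip: power_add)
    then show "c k * x ^ k / x ^ m = c k / x ^ (m - k)" using assms by simp
  qed
  also have "\<dots> = (\<Sum>l=1..m. c (m - l) / x ^ l)"
    by (rule sum.reindex_bij_witness[where i="\<lambda>l. m - l" and j="\<lambda>k. m - k"]) auto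
  finally show ?thesis .
qed

lemma sum_atLeastAtMost_double_split:
  fixes f :: "nat \<Rightarrow> 'a::comm_monoid_add"
  shows "(\<Sum>l=1..2*m. f l) = (\<Sum>j=1..m. f (2*j - 1)) + (\<Sum>j=1..m. f (2*j))"
proof (induction m)
  case (Suc m)
  have "{1..2 * Suc m} = insert (2*m + 2) (insert (2*m + 1) {1..2*m})" by auto
  then show ?case using Suc by (simp add: algebra_simps)
qed simp

lemma holomorphic_on_ball_taylor_remainder:
  fixes f :: "complex \<Rightarrow> complex"
  assumes holf: "f holomorphic_on ball w r" and r: "r > 0"
  obtains g where "isCont g w"
    "\<And>t. t \<in> ball w r \<Longrightarrow> t \<noteq> w \<Longrightarrow>
        f t = (\<Sum>k<m. (deriv ^^ k) f w / fact k * (t - w) ^ k) + (t - w) ^ m * g t"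
proof -
  define c where "c k = (deriv ^^ k) f w / fact k" for k
  define g where "g t = (\<Sum>k. c (k + m) * (t - w) ^ k)" for t
  have remainder_sums:
    "(\<lambda>k. c (k + m) * (t - w) ^ k) sums ((f t - (\<Sum>k<m. c k * (t - w) ^ k)) / (t - w) ^ m)"
    if "t \<in> ball w r" "t \<noteq> w" for t
  proof -
    have "(\<lambda>k. c k * (t - w) ^ k) sums f t"
      using holomorphic_power_series[OF holf that(1)] by (simp add: c_def)
    from sums_divide[OF sums_split_initial_segment[OF this, of m], of "(t - w) ^ m"]
    show ?thesis using that by (simp add: power_add field_simps)
  qed
  have "isCont g w"
  proof -
    have inner: "w + of_real (r/2) \<in> ball w r" "w + of_real (r/2) \<noteq> w"
      using r by (auto simp: dist_norm)
    have summable: "summable (\<lambda>k. c (k + m) * (of_real (r/2)) ^ k)"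
      using sums_summable[OF remainder_sums[OF inner]] by simp
    show ?thesis
      unfolding g_def by (rule isCont_powser'[OF _ summable]) (use r in auto)
  qed
  moreover have "f t = (\<Sum>k<m. (deriv ^^ k) f w / fact k * (t - w) ^ k) + (t - w) ^ m * g t"
    if "t \<in> ball w r" "t \<noteq> w" for t
    using sums_unique[OF remainder_sums[OF that]] that by (simp add: g_def c_def field_simps)
  ultimately show ?thesis using that by blast
qed

lemma eq_0_if_removable_singularities_and_tendsto_0:
  fixes f :: "complex \<Rightarrow> complex"
  assumes K: "finite K" and holf: "f holomorphic_on UNIV - K"
    and removable: "\<And>z. z \<in> K \<Longrightarrow> \<exists>L. (f \<longlongrightarrow> L) (at z)"
    and lim: "(f \<longlongrightarrow> 0) at_infinity" and t: "t \<notin> K"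
  shows "f t = 0"
proof -
  define g where "g z = (if z \<in> K then Lim (at z) f else f z)" for z
  have near: "eventually (\<lambda>w. f w = g w) (at z)" for z
  proof -
    have "eventually (\<lambda>w. w \<notin> K) (at z)"
      using islimpt_finite[OF K] by (simp add: islimpt_iff_eventually)
    then show ?thesis by eventually_elim (simp add: g_def)
  qed
  have "g holomorphic_on UNIV"
  proof (rule no_isolated_singularity'[where K = K])
    fix z assume "z \<in> K"
    then obtain L where L: "(f \<longlongrightarrow> L) (at z)" using removable by blast
    then have "g z = L" using \<open>z \<in> K\<close> by (simp add: g_def tendsto_Lim)
    with Lim_transform_eventually[OF L near] show "(g \<longlongrightarrow> g z) (at z within UNIV)" by simp
  next
    show "g holomorphic_on UNIV - K"
      using holf by (rule holomorphic_transform) (simp add: g_def)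
  qed (use K in auto)
  moreover have "(g \<longlongrightarrow> 0) at_infinity"
  proof -
    obtain B where "\<And>z. z \<in> K \<Longrightarrow> norm z \<le> B"
      using finite_imp_bounded[OF K] by (auto simp: bounded_iff)
    then have "eventually (\<lambda>w. f w = g w) at_infinity"
      unfolding eventually_at_infinity g_def by (intro exI[of _ "B + 1"]) force
    with lim show ?thesis by (rule Lim_transform_eventually)
  qed
  ultimately have "g t = 0" by (rule Liouville_weak_0)
  with t show ?thesis by (simp add: g_def)
qed

lemma tendsto_inverse_add_at_infinity:
  "((\<lambda>t::complex. inverse (t + w)) \<longlongrightarrow> 0) at_infinity"
  by (rule filterlim_compose[OF tendsto_inverse_0
        tendsto_add_filterlim_at_infinity'[OF filterlim_ident tendsto_const]])

lemma tendsto_mult_divide_power_add_at_infinity: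
  assumes "l > 0"
  shows "((\<lambda>t::complex. t * (c / (t + w) ^ l)) \<longlongrightarrow> (if l = 1 then c else 0)) at_infinity"
proof -
  let ?v = "\<lambda>t. inverse (t + w)"
  have "((\<lambda>t. c * (1 - w * ?v t) * ?v t ^ (l - 1)) \<longlongrightarrow> c * (1 - w * 0) * 0 ^ (l - 1)) at_infinity"
    by (intro tendsto_intros tendsto_inverse_add_at_infinity)
  moreover have "c * (1 - w * 0) * 0 ^ (l - 1) = (if l = 1 then c else 0)"
    using assms by simp
  moreover have "eventually (\<lambda>t. c * (1 - w * ?v t) * ?v t ^ (l - 1) = t * (c / (t + w) ^ l)) at_infinity"
    unfolding eventually_at_infinity
  proof (intro exI[of _ "norm w + 1"] allI impI)
    fix t :: complex assume "norm w + 1 \<le> norm t"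
    then have nz: "t + w \<noteq> 0" by (auto simp: add_eq_0_iff2)
    have "t * ?v t = 1 - w * ?v t" using nz by (simp add: field_simps)
    moreover have "c / (t + w) ^ l = c * ?v t * ?v t ^ (l - 1)"
      using assms by (cases l) (simp_all add: divide_inverse power_inverse)
    ultimately show "c * (1 - w * ?v t) * ?v t ^ (l - 1) = t * (c / (t + w) ^ l)"
      by (simp add: mult_ac)
  qed
  ultimately show ?thesis
    using Lim_transform_eventually by fastforce
qed

lemma tendsto_0_if_mult_tendsto_at_infinity:
  fixes f :: "complex \<Rightarrow> complex"
  assumes "((\<lambda>t. t * f t) \<longlongrightarrow> L) at_infinity"
  shows "(f \<longlongrightarrow> 0) at_infinity"
proof -
  have "((\<lambda>t. t * f t * inverse t) \<longlongrightarrow> L * 0) at_infinity"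
    by (intro tendsto_mult assms tendsto_inverse_0)
  moreover have "eventually (\<lambda>t. t * f t * inverse t = f t) at_infinity"
    unfolding eventually_at_infinity by (intro exI[of _ 1]) (auto simp: field_simps)
  ultimately show ?thesis by (auto simp: Lim_transform_eventually)
qed

lemma has_field_derivative_divide_power_add:
  fixes t w :: complex
  assumes "t + w \<noteq> 0"
  shows "((\<lambda>t. c / (t + w) ^ l) has_field_derivative (- of_nat l * c / (t + w) ^ (l + 1))) (at t)"
proof -
  have "((\<lambda>t. c / (t + w) ^ l) has_field_derivative
      - (c * (of_nat l * (t + w) ^ (l - 1) * 1)) / ((t + w) ^ l * (t + w) ^ l)) (at t)"
    using assms by (intro derivative_eq_intros refl) auto
  moreover have "- (c * (of_nat l * u ^ (l - 1) * 1)) / (u ^ l * u ^ l) = - of_nat l * c / u ^ (l + 1)"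
    if "u \<noteq> 0" for u :: complex
    using that by (cases l) (simp_all add: field_simps power_add)
  ultimately show ?thesis using assms by simp
qed

section \<open>Polylogarithm tails\<close>

lemma polylog_sums:
  fixes w :: complex
  assumes w: "norm w \<le> 1" and s: "s \<ge> 2"
  shows "(\<lambda>k. w ^ Suc k / of_nat (Suc k) ^ s) sums polylog s w"
proof -
  have "summable (\<lambda>k. w ^ Suc k / of_nat (Suc k) ^ s)"
  proof (rule summable_comparison_test)
    have "norm (w ^ Suc k / of_nat (Suc k) ^ s) \<le> inverse (real (Suc k) ^ 2)" for k
    proof -
      have "norm (w ^ Suc k / of_nat (Suc k) ^ s) = norm w ^ Suc k / real (Suc k) ^ s"
        by (simp only: norm_divide norm_power norm_of_nat)
      also have "\<dots> \<le> 1 / real (Suc k) ^ 2"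
      proof (rule frac_le)
        show "norm w ^ Suc k \<le> 1" using w by (intro power_le_one) auto
        show "real (Suc k) ^ 2 \<le> real (Suc k) ^ s" using s by (intro power_increasing) auto
      qed auto
      finally show ?thesis by (simp add: inverse_eq_divide)
    qed
    then show "\<exists>N. \<forall>k\<ge>N. norm (w ^ Suc k / of_nat (Suc k) ^ s) \<le> inverse (real (Suc k) ^ 2)"
      by blast
    have "summable (\<lambda>k. inverse (real k ^ 2))" by (rule inverse_power_summable) simp
    then show "summable (\<lambda>k. inverse (real (Suc k) ^ 2))" by (subst summable_Suc_iff)
  qed
  then show ?thesis unfolding polylog_def by (simp add: summable_sums)
qed

lemma polylog_shifted_sums:
  fixes z :: complex
  assumes z: "norm z \<ge> 1" and s: "s \<ge> 2"
  shows "(\<lambda>k. (1/z) ^ Suc k / (of_nat (Suc k) + of_nat j) ^ s) sums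
           (z ^ j * polylog s (1/z) - (\<Sum>k=1..j. z ^ (j - k) / of_nat k ^ s))"
proof -
  define w where "w = 1 / z"
  have z0: "z \<noteq> 0" using z by auto
  have w1: "norm w \<le> 1" using z by (simp add: w_def norm_divide divide_le_eq_1)
  from sums_mult[OF sums_split_initial_segment[OF polylog_sums[OF w1 s], of j], of "z ^ j"]
  have "(\<lambda>k. z ^ j * (w ^ Suc (k + j) / of_nat (Suc (k + j)) ^ s)) sums
          (z ^ j * (polylog s w - (\<Sum>k<j. w ^ Suc k / of_nat (Suc k) ^ s)))" .
  moreover have "z ^ j * (w ^ Suc (k + j) / of_nat (Suc (k + j)) ^ s)
      = w ^ Suc k / (of_nat (Suc k) + of_nat j) ^ s" for k
    using z0 by (simp add: w_def power_add field_simps)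
  moreover have "z ^ j * (\<Sum>k<j. w ^ Suc k / of_nat (Suc k) ^ s) = (\<Sum>k=1..j. z ^ (j - k) / of_nat k ^ s)"
  proof -
    have "z ^ j * (\<Sum>k<j. w ^ Suc k / of_nat (Suc k) ^ s) = (\<Sum>k<j. z ^ (j - Suc k) / of_nat (Suc k) ^ s)"
      unfolding sum_distrib_left
    proof (rule sum.cong[OF refl])
      fix k assume "k \<in> {..<j}"
      then have "j = (j - Suc k) + Suc k" by simp
      then have "z ^ j = z ^ (j - Suc k) * z ^ Suc k" by (metis power_add)
      then show "z ^ j * (w ^ Suc k / of_nat (Suc k) ^ s) = z ^ (j - Suc k) / of_nat (Suc k) ^ s"
        using z0 by (simp add: w_def field_simps)
    qed
    then show ?thesis by (simp add: sum.atLeast1_atMost_eq)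
  qed
  ultimately show ?thesis by (simp add: w_def right_diff_distrib)
qed

section \<open>Partial fraction expansion of R\<close>

definition R_poles :: "nat \<Rightarrow> complex set" where
  "R_poles n = (\<lambda>i. - of_nat i) ` {0..n}"

definition R_partial_fractions :: "nat \<Rightarrow> nat \<Rightarrow> complex \<Rightarrow> complex" where
  "R_partial_fractions a n t = (\<Sum>l=1..a. \<Sum>j=0..n. cc a n l j / (t + of_nat j) ^ l)"

lemma finite_R_poles [simp]: "finite (R_poles n)"
  by (simp add: R_poles_def)

lemma add_of_nat_neq_0_if_not_R_pole: "t \<notin> R_poles n \<Longrightarrow> j \<le> n \<Longrightarrow> t + of_nat j \<noteq> 0"
  by (auto simp: R_poles_def add_eq_0_iff2)

lemma not_R_pole_if_norm_gt: "norm t > real n \<Longrightarrow> t \<notin> R_poles n"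
  by (auto simp: R_poles_def)

lemma not_R_pole_if_Re_pos: "Re t > 0 \<Longrightarrow> t \<notin> R_poles n"
  by (auto simp: R_poles_def)

lemma add_of_nat_neq_0_near_other_pole:
  fixes t :: complex
  assumes "dist (- of_nat j) t < 1" "i \<noteq> j"
  shows "t + of_nat i \<noteq> 0"
proof
  assume "t + of_nat i = 0"
  with assms(1) have "norm (of_int (int i - int j) :: complex) < 1"
    by (simp add: dist_norm add_eq_0_iff2)
  then have "\<bar>int i - int j\<bar> < 1"
    by (simp only: norm_of_int of_int_abs[symmetric] of_int_less_1_iff)
  with assms(2) show False by auto
qed

lemma R_eq_Rreg_divide:
  assumes "t \<notin> R_poles n" "j \<le> n"
  shows "R a n t = Rreg a n j t / (t + of_nat j) ^ a"
proof -
  have "pochhammer t (n + 1) ^ a = (\<Prod>i\<in>{0..n}. (t + of_nat i) ^ a)"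
    by (simp add: pochhammer_Suc_prod prod_power_distrib)
  also have "\<dots> = (t + of_nat j) ^ a * (\<Prod>i\<in>{0..n} - {j}. (t + of_nat i) ^ a)"
    using assms(2) by (subst prod.remove[of _ j]) auto
  finally have denominator: "pochhammer t (n + 1) ^ a
      = (t + of_nat j) ^ a * (\<Prod>i\<in>{0..n} - {j}. (t + of_nat i) ^ a)" .
  have "(\<Prod>i\<in>{0..n} - {j}. (t + of_nat i) ^ a) \<noteq> 0" "(t + of_nat j) ^ a \<noteq> 0"
    using add_of_nat_neq_0_if_not_R_pole[OF assms(1)] assms(2) by auto
  then show ?thesis
    unfolding R_def Rreg_def denominator by (simp add: field_simps)
qed

lemma Rreg_holomorphic_on_ball: "Rreg a n j holomorphic_on ball (- of_nat j) 1"
  unfolding Rreg_def pochhammer_prod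
  by (intro holomorphic_intros) (auto dest: add_of_nat_neq_0_near_other_pole)

lemma R_holomorphic: "R a n holomorphic_on UNIV - R_poles n"
  unfolding R_def pochhammer_prod
  by (intro holomorphic_intros) (auto simp: add_of_nat_neq_0_if_not_R_pole)

lemma R_partial_fractions_holomorphic: "R_partial_fractions a n holomorphic_on UNIV - R_poles n"
  unfolding R_partial_fractions_def
  by (intro holomorphic_intros) (auto simp: add_of_nat_neq_0_if_not_R_pole)

lemma not_R_pole_near_pole:
  assumes "dist (- of_nat j) t < 1" "t \<noteq> - of_nat j"
  shows "t \<notin> R_poles n"
proof
  assume "t \<in> R_poles n"
  then obtain i where "t = - of_nat i" by (auto simp: R_poles_def)
  with assms add_of_nat_neq_0_near_other_pole[of j t i] show False
    by (cases "i = j") auto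
qed

text \<open>The principal part of R at -j is the Taylor polynomial of degree a - 1 of Rreg at -j,
  divided by (t + j)^a.\<close>

lemma R_eq_principal_part_plus_continuous:
  assumes j: "j \<le> n"
  obtains g where "isCont g (- of_nat j)"
    "\<And>t. t \<in> ball (- of_nat j) 1 \<Longrightarrow> t \<noteq> - of_nat j \<Longrightarrow>
       R a n t = (\<Sum>l=1..a. cc a n l j / (t + of_nat j) ^ l) + g t"
proof -
  obtain g where "isCont g (- of_nat j)" and taylor:
    "\<And>t. t \<in> ball (- of_nat j) 1 \<Longrightarrow> t \<noteq> - of_nat j \<Longrightarrow> Rreg a n j t =
       (\<Sum>k<a. (deriv ^^ k) (Rreg a n j) (- of_nat j) / fact k * (t - - of_nat j) ^ k)
        + (t - - of_nat j) ^ a * g t"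
    using holomorphic_on_ball_taylor_remainder[OF Rreg_holomorphic_on_ball[of a n j] zero_less_one, where m = a]
    by blast
  moreover have "R a n t = (\<Sum>l=1..a. cc a n l j / (t + of_nat j) ^ l) + g t"
    if t: "t \<in> ball (- of_nat j) 1" "t \<noteq> - of_nat j" for t
  proof -
    have "t \<notin> R_poles n" using not_R_pole_near_pole t by simp
    then have nz: "t + of_nat j \<noteq> 0" using add_of_nat_neq_0_if_not_R_pole j by blast
    have "R a n t = Rreg a n j t / (t + of_nat j) ^ a"
      using R_eq_Rreg_divide[OF \<open>t \<notin> R_poles n\<close> j] .
    also have "\<dots> = (\<Sum>k<a. (deriv ^^ k) (Rreg a n j) (- of_nat j) / fact k * (t + of_nat j) ^ k)
         / (t + of_nat j) ^ a + g t"
      using taylor[OF t] nz by (simp add: add_divide_distrib)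
    also have "\<dots> = (\<Sum>l=1..a. cc a n l j / (t + of_nat j) ^ l) + g t"
      by (subst sum_mult_power_divide_power[OF nz]) (simp add: cc_def)
    finally show ?thesis .
  qed
  ultimately show ?thesis using that by blast
qed

lemma R_minus_partial_fractions_has_limit_at_pole:
  assumes j: "j \<le> n"
  shows "\<exists>L. ((\<lambda>t. R a n t - R_partial_fractions a n t) \<longlongrightarrow> L) (at (- of_nat j))"
proof -
  obtain g where g: "isCont g (- of_nat j)" and R_near:
    "\<And>t. t \<in> ball (- of_nat j) 1 \<Longrightarrow> t \<noteq> - of_nat j \<Longrightarrow>
       R a n t = (\<Sum>l=1..a. cc a n l j / (t + of_nat j) ^ l) + g t"
    using R_eq_principal_part_plus_continuous[OF j] by blast
  define E where "E t = (\<Sum>l=1..a. \<Sum>i\<in>{0..n}-{j}. cc a n l i / (t + of_nat i) ^ l)" for t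
  have "isCont E (- of_nat j)"
    unfolding E_def
    by (intro continuous_intros) (use add_of_nat_neq_0_near_other_pole[of j "- of_nat j"] in auto)
  have "R_partial_fractions a n t = (\<Sum>l=1..a. cc a n l j / (t + of_nat j) ^ l) + E t" for t
    unfolding R_partial_fractions_def E_def sum.distrib[symmetric] using j
    by (intro sum.cong refl, subst sum.remove[of _ j]) auto
  then have "eventually (\<lambda>t. g t - E t = R a n t - R_partial_fractions a n t) (at (- of_nat j))"
    unfolding eventually_at using R_near by (intro exI[of _ 1]) (auto simp: dist_commute)
  moreover have "((\<lambda>t. g t - E t) \<longlongrightarrow> g (- of_nat j) - E (- of_nat j)) (at (- of_nat j))"
    using g \<open>isCont E (- of_nat j)\<close> by (intro tendsto_intros) (auto simp: isCont_def)
  ultimately have "((\<lambda>t. R a n t - R_partial_fractions a n t) \<longlongrightarrow> g (- of_nat j) - E (- of_nat j))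
      (at (- of_nat j))"
    by (rule Lim_transform_eventually[rotated])
  then show ?thesis ..
qed

lemma norm_R_numerator_le:
  fixes t :: complex
  assumes t: "norm t \<ge> 2 * real n + 2"
  shows "norm ((t + of_nat n / 2) * pochhammer (t - of_nat n) n ^ 3 * pochhammer (t + of_nat n + 1) n ^ 3)
           \<le> (2 * norm t) ^ (6 * n + 1)"
proof -
  have "norm (t + of_nat n / 2) \<le> 2 * norm t"
    using norm_triangle_ineq[of t "of_nat n / 2"] t by (simp add: norm_divide)
  moreover have "norm (pochhammer (t - of_nat n) n) \<le> (2 * norm t) ^ n"
  proof -
    have "norm (t - of_nat n) + n \<le> 2 * norm t"
      using norm_triangle_ineq4[of t "of_nat n"] t by simp
    then show ?thesis
      using norm_pochhammer_le[of "t - of_nat n" n] by (meson order_trans power_mono norm_ge_zero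
          add_nonneg_nonneg of_nat_0_le_iff)
  qed
  moreover have "norm (pochhammer (t + of_nat n + 1) n) \<le> (2 * norm t) ^ n"
  proof -
    have "norm (t + (of_nat n + 1)) \<le> norm t + (n + 1)"
      using norm_triangle_ineq[of t "of_nat n + 1"] norm_of_nat[of "Suc n", where 'a=complex]
      by (simp add: add.commute)
    then have "norm (t + of_nat n + 1) + n \<le> 2 * norm t"
      using t by (simp add: add.assoc)
    then show ?thesis
      using norm_pochhammer_le[of "t + of_nat n + 1" n] by (meson order_trans power_mono norm_ge_zero
          add_nonneg_nonneg of_nat_0_le_iff)
  qed
  ultimately have "norm ((t + of_nat n / 2) * pochhammer (t - of_nat n) n ^ 3 * pochhammer (t + of_nat n + 1) n ^ 3)
      \<le> (2 * norm t) * ((2 * norm t) ^ n) ^ 3 * ((2 * norm t) ^ n) ^ 3"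
    unfolding norm_mult norm_power by (intro mult_mono power_mono) auto
  also have "\<dots> = (2 * norm t) ^ (6 * n + 1)"
    by (simp flip: power_mult power_add add: algebra_simps)
  finally show ?thesis .
qed

lemma norm_R_denominator_ge:
  fixes t :: complex
  assumes t: "norm t \<ge> 2 * real n + 2"
  shows "(norm t / 2) ^ ((n + 1) * a) \<le> norm (pochhammer t (n + 1) ^ a)"
proof -
  have "norm t / 2 \<le> norm t - real (n + 1)" using t by simp
  then have "(norm t / 2) ^ (n + 1) \<le> (norm t - real (n + 1)) ^ (n + 1)"
    by (intro power_mono) auto
  also have "\<dots> \<le> norm (pochhammer t (n + 1))"
    using norm_pochhammer_ge[of "n + 1" t] t by simp
  finally have "((norm t / 2) ^ (n + 1)) ^ a \<le> norm (pochhammer t (n + 1)) ^ a"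
    by (intro power_mono) auto
  then show ?thesis by (simp only: norm_power power_mult)
qed

lemma norm_R_le:
  fixes t :: complex
  assumes a: "a \<ge> 6" and t: "norm t \<ge> 2 * real n + 2"
  shows "norm (R a n t) \<le> fact n ^ (a - 6) * 2 ^ (6 * n + 1) * 2 ^ ((n + 1) * a) / norm t ^ 5"
proof -
  define X where "X = norm t"
  define K where "K = (fact n ^ (a - 6) :: real)"
  have X: "X \<ge> 1" using t by (simp add: X_def)
  have "norm (fact n ^ (a - 6) * (t + of_nat n / 2) * pochhammer (t - of_nat n) n ^ 3
      * pochhammer (t + of_nat n + 1) n ^ 3)
      = K * norm ((t + of_nat n / 2) * pochhammer (t - of_nat n) n ^ 3 * pochhammer (t + of_nat n + 1) n ^ 3)"
    by (simp add: norm_mult norm_power K_def)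
  also have "\<dots> \<le> K * (2 * X) ^ (6 * n + 1)"
    unfolding X_def by (rule mult_left_mono[OF norm_R_numerator_le[OF t]]) (simp add: K_def)
  finally have numerator: "norm (fact n ^ (a - 6) * (t + of_nat n / 2) * pochhammer (t - of_nat n) n ^ 3
      * pochhammer (t + of_nat n + 1) n ^ 3) \<le> K * (2 * X) ^ (6 * n + 1)" .
  have "(X / 2) ^ ((n + 1) * a) > 0" using X by simp
  then have "norm (R a n t) \<le> K * (2 * X) ^ (6 * n + 1) / (X / 2) ^ ((n + 1) * a)"
    unfolding R_def norm_divide X_def
    by (intro frac_le[OF _ numerator[unfolded X_def]] norm_R_denominator_ge[OF t]) (simp_all add: K_def)
  also have "\<dots> = K * 2 ^ (6 * n + 1) * 2 ^ ((n + 1) * a) * (X ^ (6 * n + 1) / X ^ ((n + 1) * a))"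
    by (simp add: field_simps)
  also have "X ^ (6 * n + 1) / X ^ ((n + 1) * a) \<le> 1 / X ^ 5"
  proof -
    have "X ^ (6 * n + 1 + 5) \<le> X ^ ((n + 1) * a)"
      using X mult_le_mono2[OF a, of "n + 1"] by (intro power_increasing) auto
    then have "X ^ (6 * n + 1) * X ^ 5 \<le> X ^ ((n + 1) * a)" by (simp only: power_add)
    then show ?thesis using X by (simp add: divide_simps)
  qed
  finally show ?thesis
    by (simp add: X_def K_def)
qed

lemma tendsto_mult_R_at_infinity:
  assumes "a \<ge> 6"
  shows "((\<lambda>t. t * R a n t) \<longlongrightarrow> 0) at_infinity"
proof (rule Lim_null_comparison)
  define C where "C = (fact n ^ (a - 6) * 2 ^ (6 * n + 1) * 2 ^ ((n + 1) * a) :: real)"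
  show "((\<lambda>t::complex. C / norm t ^ 4) \<longlongrightarrow> 0) at_infinity"
    by (intro tendsto_divide_0[OF tendsto_const] filterlim_at_top_imp_at_infinity
        filterlim_pow_at_top filterlim_norm_at_top) simp
  show "\<forall>\<^sub>F t in at_infinity. norm (t * R a n t) \<le> C / norm t ^ 4"
    unfolding eventually_at_infinity
  proof (intro exI[of _ "2 * real n + 2"] allI impI)
    fix t :: complex assume t: "2 * real n + 2 \<le> norm t"
    then have "norm t > 0" using of_nat_0_le_iff[of n] by linarith
    have "norm (t * R a n t) \<le> norm t * (C / norm t ^ 5)"
      unfolding norm_mult using norm_R_le[OF assms t] by (intro mult_left_mono) (auto simp: C_def)
    also have "\<dots> = C / norm t ^ 4"
    proof -
      have "norm t ^ 5 = norm t * norm t ^ 4" by (subst power_Suc[symmetric]) simp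
      then show ?thesis using \<open>norm t > 0\<close> by simp
    qed
    finally show "norm (t * R a n t) \<le> C / norm t ^ 4" .
  qed
qed

lemma tendsto_mult_R_partial_fractions_at_infinity:
  assumes "a \<ge> 1"
  shows "((\<lambda>t. t * R_partial_fractions a n t) \<longlongrightarrow> P a n 1 1) at_infinity"
proof -
  have "((\<lambda>t. \<Sum>l=1..a. \<Sum>j=0..n. t * (cc a n l j / (t + of_nat j) ^ l))
          \<longlongrightarrow> (\<Sum>l=1..a. \<Sum>j=0..n. if l = 1 then cc a n l j else 0)) at_infinity"
    by (intro tendsto_sum tendsto_mult_divide_power_add_at_infinity) auto
  moreover have "(\<Sum>l=1..a. \<Sum>j=0..n. if l = 1 then cc a n l j else 0)
      = (\<Sum>l=1..a. if l = 1 then P a n 1 1 else 0)"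
    by (intro sum.cong refl) (simp add: P_def)
  moreover have "\<dots> = P a n 1 1" using assms by simp
  ultimately show ?thesis
    by (simp add: R_partial_fractions_def sum_distrib_left)
qed

theorem R_eq_partial_fractions:
  assumes a: "a \<ge> 6" and t: "t \<notin> R_poles n"
  shows "R a n t = R_partial_fractions a n t"
proof -
  have "R a n t - R_partial_fractions a n t = 0"
  proof (rule eq_0_if_removable_singularities_and_tendsto_0[OF finite_R_poles _ _ _ t])
    show "(\<lambda>t. R a n t - R_partial_fractions a n t) holomorphic_on UNIV - R_poles n"
      by (intro holomorphic_intros R_holomorphic R_partial_fractions_holomorphic)
    show "\<exists>L. ((\<lambda>t. R a n t - R_partial_fractions a n t) \<longlongrightarrow> L) (at z)" if "z \<in> R_poles n" for z
      using that R_minus_partial_fractions_has_limit_at_pole by (auto simp: R_poles_def)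
    have "(R a n \<longlongrightarrow> 0) at_infinity"
      by (rule tendsto_0_if_mult_tendsto_at_infinity[OF tendsto_mult_R_at_infinity[OF a]])
    moreover have "(R_partial_fractions a n \<longlongrightarrow> 0) at_infinity"
      by (rule tendsto_0_if_mult_tendsto_at_infinity[OF tendsto_mult_R_partial_fractions_at_infinity])
        (use a in simp)
    ultimately show "((\<lambda>t. R a n t - R_partial_fractions a n t) \<longlongrightarrow> 0) at_infinity"
      using tendsto_diff by fastforce
  qed
  then show ?thesis by simp
qed

lemma P_1_at_1_eq_0:
  assumes a: "a \<ge> 6"
  shows "P a n 1 1 = 0"
proof -
  have "eventually (\<lambda>t. t * R a n t = t * R_partial_fractions a n t) at_infinity"
    unfolding eventually_at_infinity using R_eq_partial_fractions[OF a] not_R_pole_if_norm_gt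
    by (intro exI[of _ "real n + 1"]) auto
  then have "((\<lambda>t. t * R_partial_fractions a n t) \<longlongrightarrow> 0) at_infinity"
    by (rule Lim_transform_eventually[OF tendsto_mult_R_at_infinity[OF a]])
  with tendsto_mult_R_partial_fractions_at_infinity[of a n] a show ?thesis
    using tendsto_unique[OF trivial_limit_at_infinity] by fastforce
qed

section \<open>The series S\<close>

lemma higher_deriv_2_R:
  assumes a: "a \<ge> 6" and x: "Re x > 0"
  shows "(deriv ^^ 2) (R a n) x
           = (\<Sum>l=1..a. \<Sum>j=0..n. of_nat (l * (l + 1)) * cc a n l j / (x + of_nat j) ^ (l + 2))"
proof -
  define H where "H = {t::complex. Re t > 0}"
  have "open H" unfolding H_def by (simp add: open_halfspace_Re_gt)
  have H: "H \<subseteq> UNIV - R_poles n" unfolding H_def using not_R_pole_if_Re_pos by auto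
  have nz: "t + of_nat j \<noteq> 0" if "t \<in> H" for t j
    using that by (auto simp: H_def complex_eq_iff)
  have "(deriv ^^ 2) (R a n) x = (deriv ^^ 2) (R_partial_fractions a n) x"
    by (rule higher_deriv_transform_within_open[OF holomorphic_on_subset[OF R_holomorphic H]
          holomorphic_on_subset[OF R_partial_fractions_holomorphic H] \<open>open H\<close>])
      (use x H R_eq_partial_fractions[OF a] in \<open>auto simp: H_def\<close>)
  also have "\<dots> = deriv (deriv (R_partial_fractions a n)) x"
    by (simp add: numeral_2_eq_2)
  also have "deriv (deriv (R_partial_fractions a n)) x
      = deriv (\<lambda>t. \<Sum>l=1..a. \<Sum>j=0..n. - of_nat l * cc a n l j / (t + of_nat j) ^ (l + 1)) x"
  proof (rule deriv_cong_ev[OF _ refl])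
    have "eventually (\<lambda>t. t \<in> H) (nhds x)"
      using \<open>open H\<close> x by (intro eventually_nhds_in_open) (auto simp: H_def)
    then show "eventually (\<lambda>t. deriv (R_partial_fractions a n) t
        = (\<Sum>l=1..a. \<Sum>j=0..n. - of_nat l * cc a n l j / (t + of_nat j) ^ (l + 1))) (nhds x)"
      unfolding R_partial_fractions_def[abs_def]
      by eventually_elim
        (intro DERIV_imp_deriv DERIV_sum has_field_derivative_divide_power_add nz)
  qed
  also have "\<dots> = (\<Sum>l=1..a. \<Sum>j=0..n.
      - of_nat (l + 1) * (- of_nat l * cc a n l j) / (x + of_nat j) ^ (l + 1 + 1))"
    using x by (intro DERIV_imp_deriv DERIV_sum has_field_derivative_divide_power_add nz)
      (simp add: H_def)
  also have "\<dots> = (\<Sum>l=1..a. \<Sum>j=0..n. of_nat (l * (l + 1)) * cc a n l j / (x + of_nat j) ^ (l + 2))"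
    by (intro sum.cong refl) (simp add: algebra_simps)
  finally show ?thesis .
qed

theorem S_eq_polylog_expansion:
  fixes z :: complex
  assumes a: "a \<ge> 6" and z: "norm z \<ge> 1"
  shows "S a n z = P0 a n z + (\<Sum>l=1..a. of_nat (l * (l + 1)) / 2 * P a n l z * polylog (l + 2) (1 / z))"
proof -
  define c where "c l j = of_nat (l * (l + 1)) * cc a n l j / 2" for l j
  define Q where "Q l j = (\<Sum>k=1..j. z ^ (j - k) / of_nat k ^ (l + 2))" for l j
  have summand: "(1/2) * (deriv ^^ 2) (R a n) (of_nat (Suc k)) * z powi (- int (Suc k))
      = (\<Sum>l=1..a. \<Sum>j=0..n. c l j * ((1/z) ^ Suc k / (of_nat (Suc k) + of_nat j) ^ (l + 2)))" for k
  proof -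
    have "z powi (- int (Suc k)) = (1/z) ^ Suc k"
      by (simp only: power_int_minus power_int_of_nat power_one_over inverse_eq_divide)
    then show ?thesis
      by (simp add: higher_deriv_2_R[OF a] sum_distrib_left sum_distrib_right c_def field_simps)
  qed
  have "(\<lambda>k. \<Sum>l=1..a. \<Sum>j=0..n. c l j * ((1/z) ^ Suc k / (of_nat (Suc k) + of_nat j) ^ (l + 2)))
      sums (\<Sum>l=1..a. \<Sum>j=0..n. c l j * (z ^ j * polylog (l + 2) (1/z) - Q l j))"
    unfolding Q_def by (intro sums_sum sums_mult polylog_shifted_sums z) simp
  then have "S a n z = (\<Sum>l=1..a. \<Sum>j=0..n. c l j * (z ^ j * polylog (l + 2) (1/z) - Q l j))"
    unfolding S_def summand by (rule sums_unique[symmetric])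
  also have "\<dots> = (\<Sum>l=1..a. of_nat (l * (l + 1)) / 2 * P a n l z * polylog (l + 2) (1 / z))
       - (\<Sum>l=1..a. \<Sum>j=0..n. c l j * Q l j)"
    by (simp add: right_diff_distrib diff_divide_distrib sum_subtractf P_def c_def
        sum_distrib_left sum_distrib_right mult_ac)
  also have "(\<Sum>l=1..a. \<Sum>j=0..n. c l j * Q l j) = - P0 a n z"
  proof -
    have "(\<Sum>j=0..n. c l j * Q l j) = (\<Sum>j=1..n. c l j * Q l j)" for l
      by (simp add: Q_def sum.atLeast_Suc_atMost)
    moreover have "c l j * Q l j
        = (\<Sum>k=1..j. of_nat (l * (l + 1)) * cc a n l j / (2 * of_nat k ^ (l + 2)) * z ^ (j - k))" for l j
      unfolding c_def Q_def sum_distrib_left by (intro sum.cong refl) (simp add: field_simps)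
    ultimately show ?thesis by (simp add: P0_def)
  qed
  finally show ?thesis by simp
qed

section \<open>The reflection symmetry for even a\<close>

lemma Rreg_reflect:
  assumes a: "even a" and j: "j \<le> n"
  shows "Rreg a n (n - j) (- t - of_nat n) = - Rreg a n j t"
proof -
  have linear: "(- t - of_nat n + of_nat n / 2 :: complex) = - (t + of_nat n / 2)"
    by (simp add: field_simps)
  have poch1: "pochhammer (- t - of_nat n - of_nat n) n = (-1) ^ n * pochhammer (t + of_nat n + 1) n"
    using pochhammer_minus[of "t + 2 * of_nat n" n] by (simp add: algebra_simps)
  have poch2: "pochhammer (- t - of_nat n + of_nat n + 1) n = (-1) ^ n * pochhammer (t - of_nat n) n"
    using pochhammer_minus[of "t - 1" n] by (simp add: algebra_simps)
  have prod: "(\<Prod>i\<in>{0..n} - {n - j}. (- t - of_nat n + of_nat i) ^ a)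
      = (\<Prod>i\<in>{0..n} - {j}. (t + of_nat i) ^ a)"
  proof (rule prod.reindex_bij_witness[where i="\<lambda>i. n - i" and j="\<lambda>i. n - i"])
    fix i assume "i \<in> {0..n} - {n - j}"
    then have "(t + of_nat (n - i) :: complex) = - (- t - of_nat n + of_nat i)"
      by simp
    then show "(t + of_nat (n - i)) ^ a = (- t - of_nat n + of_nat i) ^ a"
      using power_minus_even[OF a] by metis
  qed (use j in auto)
  have "((-1::complex) ^ n) ^ 6 = 1"
    by (simp flip: power_mult)
  then show ?thesis
    unfolding Rreg_def linear poch1 poch2 prod by (simp add: field_simps)
qed

lemma cc_reflect:
  assumes a: "even a" and j: "j \<le> n"
  shows "cc a n l j = - ((-1) ^ (a - l) * cc a n l (n - j))"
proof -
  define S where "S = ball (- of_nat j :: complex) 1"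
  define T where "T = ball (- of_nat (n - j) :: complex) 1"
  have holT: "Rreg a n (n - j) holomorphic_on T"
    unfolding T_def by (rule Rreg_holomorphic_on_ball)
  have ST: "(-1) * w + (- of_nat n) \<in> T" if "w \<in> S" for w
  proof -
    have "(-1) * w + (- of_nat n) - (- of_nat (n - j)) = - (w + of_nat j)"
      using j by simp
    then have "dist (- of_nat (n - j)) ((-1) * w + (- of_nat n)) = norm (w + of_nat j)"
      by (metis dist_norm norm_minus_cancel norm_minus_commute)
    also have "\<dots> < 1" using that by (simp add: S_def dist_norm norm_minus_commute)
    finally show ?thesis by (simp add: T_def)
  qed
  have "(\<lambda>w. Rreg a n (n - j) ((-1) * w + (- of_nat n))) holomorphic_on S"
  proof -
    have "(\<lambda>w. (-1) * w + (- of_nat n :: complex)) holomorphic_on S" by (intro holomorphic_intros)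
    moreover have "(\<lambda>w. (-1) * w + (- of_nat n)) ` S \<subseteq> T" using ST by auto
    ultimately show ?thesis
      using holomorphic_on_compose[OF _ holomorphic_on_subset[OF holT]] by (simp add: o_def)
  qed
  moreover have "Rreg a n j = (\<lambda>w. - Rreg a n (n - j) ((-1) * w + (- of_nat n)))"
    using Rreg_reflect[OF a j] by (auto simp: fun_eq_iff)
  ultimately have "(deriv ^^ (a - l)) (Rreg a n j) (- of_nat j)
      = - (deriv ^^ (a - l)) (\<lambda>w. Rreg a n (n - j) ((-1) * w + (- of_nat n))) (- of_nat j)"
    by (metis higher_deriv_uminus open_ball centre_in_ball zero_less_one S_def)
  also have "\<dots> = - ((-1) ^ (a - l) * (deriv ^^ (a - l)) (Rreg a n (n - j)) ((-1) * (- of_nat j) + (- of_nat n)))"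
    by (subst higher_deriv_compose_linear'[where S=S, OF holT _ _ _ ST]) (simp_all add: S_def T_def)
  also have "((-1) * (- of_nat j) + (- of_nat n) :: complex) = - of_nat (n - j)"
    using j by simp
  finally show ?thesis unfolding cc_def by simp
qed

lemma P_at_1_eq_0_if_even:
  assumes a: "even a" and l: "even (a - l)"
  shows "P a m l 1 = 0"
proof -
  have "(\<Sum>j=0..m. cc a m l j) = (\<Sum>j=0..m. cc a m l (m + 0 - j))"
    by (rule sum.atLeastAtMost_rev)
  also have "\<dots> = (\<Sum>j=0..m. - cc a m l j)"
  proof (rule sum.cong[OF refl])
    fix j assume "j \<in> {0..m}"
    then show "cc a m l (m + 0 - j) = - cc a m l j"
      using cc_reflect[OF a, of j m l] l by simp
  qed
  finally have "(\<Sum>j=0..m. cc a m l j) = 0" by (simp add: sum_negf)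
  then show ?thesis by (simp add: P_def)
qed

lemma S_at_1_eq_zeta_expansion:
  assumes a: "a \<ge> 6" "even a"
  shows "S a n 1 = P0 a n 1
    + (\<Sum>j=2..a div 2. of_nat (j * (2 * j - 1)) * P a n (2 * j - 1) 1 * zeta_nat (2 * j + 1))"
proof -
  define f where "f l = of_nat (l * (l + 1)) / 2 * P a n l 1 * zeta_nat (l + 2)" for l
  obtain m where m: "a = 2 * m" "m \<ge> 1" using a by (auto elim: evenE)
  have "S a n 1 = P0 a n 1 + (\<Sum>l=1..2*m. f l)"
    using S_eq_polylog_expansion[OF a(1), of 1] m by (simp add: f_def polylog_def zeta_nat_def)
  also have "(\<Sum>l=1..2*m. f l) = (\<Sum>j=1..m. f (2*j - 1)) + (\<Sum>j=1..m. f (2*j))"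
    by (rule sum_atLeastAtMost_double_split)
  also have "(\<Sum>j=1..m. f (2*j)) = 0"
    using P_at_1_eq_0_if_even[OF a(2)] m by (simp add: f_def)
  also have "(\<Sum>j=1..m. f (2*j - 1)) = (\<Sum>j=2..m. f (2*j - 1))"
  proof -
    have "f 1 = 0" using P_1_at_1_eq_0[OF a(1)] by (simp add: f_def)
    then show ?thesis
      using sum.atLeast_Suc_atMost[OF m(2), of "\<lambda>j. f (2*j - 1)"] by (simp add: numeral_2_eq_2)
  qed
  also have "\<dots> = (\<Sum>j=2..m. of_nat (j * (2 * j - 1)) * P a n (2 * j - 1) 1 * zeta_nat (2 * j + 1))"
  proof (intro sum.cong refl)
    fix j assume "j \<in> {2..m}"
    then have "(2 * j - 1) * (2 * j - 1 + 1) = 2 * (j * (2 * j - 1))" "2 * j - 1 + 2 = 2 * j + 1"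
      by (simp_all add: algebra_simps)
    then show "f (2*j - 1) = of_nat (j * (2 * j - 1)) * P a n (2 * j - 1) 1 * zeta_nat (2 * j + 1)"
      unfolding f_def by simp
  qed
  moreover have "a div 2 = m" using m by simp
  ultimately show ?thesis by (simp only: add_0_right)
qed

theorem mainTheorem2:
  fixes a n :: nat
  assumes "a \<ge> 6"
  shows "(\<forall>z::complex. norm z > 1 \<longrightarrow>
            S a n z = P0 a n z + (\<Sum>l=1..a. of_nat (l * (l + 1)) / 2 * P a n l z * polylog (l + 2) (1 / z)))
       \<and> P a n 1 1 = 0
       \<and> (even a \<longrightarrow>
            (\<forall>m l. even l \<and> 2 \<le> l \<and> l \<le> a \<longrightarrow> P a m l 1 = 0)
          \<and> S a n 1 = P0 a n 1 + (\<Sum>j=2..a div 2. of_nat (j * (2 * j - 1)) * P a n (2 * j - 1) 1 * zeta_nat (2 * j + 1)))"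
  using S_eq_polylog_expansion[OF assms] P_1_at_1_eq_0[OF assms] P_at_1_eq_0_if_even
    S_at_1_eq_zeta_expansion[OF assms]
  by auto

end
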